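(* Let $L_1>0$, $L_4\in\mathbb{R}$ and $\kappa_2\ge\frac{L_4^2}{2L_1}$, and let $\mathcal{L}_{h,\kappa_2}Q_h=L_1\Delta_hQ_h-\frac{L_4}{2}\mathcal{C}_hQ_h-\kappa_2Q_h$ on $\mathcal{M}_h$. Then for every $Q_h\in\mathcal{M}_h$, $$\langle\mathcal{L}_{h,\kappa_2}Q_h,Q_h\rangle_h\le0,$$ and $\mathcal{L}_{h,\kappa_2}$ generates a contraction semigroup in the discrete $L^2$ norm: $\|e^{t\mathcal{L}_{h,\kappa_2}}Q_h\|_2\le\|Q_h\|_2$ for all $t\ge0$ and $Q_h\in\mathcal{M}_h$.
   Context: Let $\Omega=(-X,X)\times(-Y,Y)\times(-Z,Z)$, $N_x,N_y,N_z$ positive even integers, $h_x=2X/N_x$, $h_y=2Y/N_y$, $h_z=2Z/N_z$, grid $S_h=\{(-X+ih_x,-Y+jh_y,-Z+kh_z):1\le i\le N_x,1\le j\le N_y,1\le k\le N_z\}$, and wavevector set $\hat S_h=\{(\pi n_1/X,\pi n_2/Y,\pi n_3/Z):-N_x/2+1\le n_1\le N_x/2,\ -N_y/2+1\le n_2\le N_y/2,\ -N_z/2+1\le n_3\le N_z/2\}$. $\mathcal{M}_h$ is the set of periodic grid functions $S_h\to\mathbb{R}^{3\times3}$, with discrete inner product $\langle M,N\rangle_h=h_xh_yh_z\sum_{x\in S_h}M(x):N(x)$ and norm $\|M\|_2=\langle M,M\rangle_h^{1/2}$. The discrete Fourier transform is $\widehat Q_{\boldsymbol k}=\sum_{x\in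 S_h}Q_h(x)e^{-i\boldsymbol k\cdot x}$, $\boldsymbol k\in\hat S_h$. The discrete Laplacian $\Delta_h$ has Fourier symbol $-|\boldsymbol k|^2$. The discrete curl $\nabla_h\times$ acts row-wise with symbol $\widehat{(\nabla_h\times Q_h)}_{\boldsymbol k}=i\boldsymbol k\times_r\widehat Q_{\boldsymbol k}$ (the $r$-th row is $i\boldsymbol k\times$ (the $r$-th row of $\widehat Q_{\boldsymbol k}$)), and $\mathcal{C}_hQ_h=\nabla_h\times Q_h+(\nabla_h\times Q_h)^T$. *)

theory Defs
  imports "HOL-Analysis.Analysis"
begin

text \<open>Grid functions are maps from index triples (i,j,k), 1 <= i <= Nx etc., to real 3x3 matrices;
  by convention they vanish off the index set (the periodic extension is implicit in the DFT).\<close>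

type_synonym gridfun = "nat \<times> nat \<times> nat \<Rightarrow> real^3^3"

definition grid_idx :: "nat \<Rightarrow> nat \<Rightarrow> nat \<Rightarrow> (nat \<times> nat \<times> nat) set" where
  "grid_idx Nx Ny Nz = {1..Nx} \<times> {1..Ny} \<times> {1..Nz}"

definition grid_pt :: "real \<Rightarrow> real \<Rightarrow> real \<Rightarrow> nat \<Rightarrow> nat \<Rightarrow> nat \<Rightarrow> nat \<times> nat \<times> nat \<Rightarrow> real^3" where
  "grid_pt X Y Z Nx Ny Nz p = (case p of (i, j, k) \<Rightarrow>
      vector [-X + real i * (2 * X / real Nx), -Y + real j * (2 * Y / real Ny), -Z + real k * (2 * Z / real Nz)])"

definition wave_idx :: "nat \<Rightarrow> nat \<Rightarrow> nat \<Rightarrow> (int \<times> int \<times> int) set" where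
  "wave_idx Nx Ny Nz = {- int Nx div 2 + 1 .. int Nx div 2} \<times> {- int Ny div 2 + 1 .. int Ny div 2}
                        \<times> {- int Nz div 2 + 1 .. int Nz div 2}"

definition wave_vec :: "real \<Rightarrow> real \<Rightarrow> real \<Rightarrow> int \<times> int \<times> int \<Rightarrow> real^3" where
  "wave_vec X Y Z n = (case n of (n1, n2, n3) \<Rightarrow>
      vector [pi * real_of_int n1 / X, pi * real_of_int n2 / Y, pi * real_of_int n3 / Z])"

definition Mh :: "nat \<Rightarrow> nat \<Rightarrow> nat \<Rightarrow> gridfun set" where
  "Mh Nx Ny Nz = {Q. \<forall>p. p \<notin> grid_idx Nx Ny Nz \<longrightarrow> Q p = 0}"

definition dft :: "real \<Rightarrow> real \<Rightarrow> real \<Rightarrow> nat \<Rightarrow> nat \<Rightarrow> nat \<Rightarrow> gridfun \<Rightarrow> int \<times> int \<times> int \<Rightarrow> complex^3^3" where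
  "dft X Y Z Nx Ny Nz Q n = (\<chi> r c. \<Sum>p\<in>grid_idx Nx Ny Nz.
      complex_of_real (Q p $ r $ c) * cis (- (wave_vec X Y Z n \<bullet> grid_pt X Y Z Nx Ny Nz p)))"

text \<open>Spectral operator with Fourier symbol \<open>\<sigma>\<close> (acting on the Fourier coefficient at wavevector k),
  realised through the inverse DFT; the real part is taken so that the result is a real grid function.\<close>
definition spec_op :: "real \<Rightarrow> real \<Rightarrow> real \<Rightarrow> nat \<Rightarrow> nat \<Rightarrow> nat \<Rightarrow>
    (real^3 \<Rightarrow> complex^3^3 \<Rightarrow> complex^3^3) \<Rightarrow> gridfun \<Rightarrow> gridfun" where
  "spec_op X Y Z Nx Ny Nz \<sigma> Q = (\<lambda>p. if p \<in> grid_idx Nx Ny Nz then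
      (\<chi> r c. Re ((1 / of_nat (Nx * Ny * Nz)) * (\<Sum>n\<in>wave_idx Nx Ny Nz.
         (\<sigma> (wave_vec X Y Z n) (dft X Y Z Nx Ny Nz Q n)) $ r $ c
           * cis (wave_vec X Y Z n \<bullet> grid_pt X Y Z Nx Ny Nz p))))
    else 0)"

definition lap_sym :: "real^3 \<Rightarrow> complex^3^3 \<Rightarrow> complex^3^3" where
  "lap_sym k A = (\<chi> r c. - complex_of_real ((norm k)\<^sup>2) * A $ r $ c)"

definition cross_c :: "complex^3 \<Rightarrow> complex^3 \<Rightarrow> complex^3" where
  "cross_c a b = vector [a$2 * b$3 - a$3 * b$2, a$3 * b$1 - a$1 * b$3, a$1 * b$2 - a$2 * b$1]"

definition curl_sym :: "real^3 \<Rightarrow> complex^3^3 \<Rightarrow> complex^3^3" where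
  "curl_sym k A = (\<chi> r. (\<chi> c. \<i> * cross_c (\<chi> l. complex_of_real (k $ l)) (A $ r) $ c))"

definition lap_h :: "real \<Rightarrow> real \<Rightarrow> real \<Rightarrow> nat \<Rightarrow> nat \<Rightarrow> nat \<Rightarrow> gridfun \<Rightarrow> gridfun" where
  "lap_h X Y Z Nx Ny Nz = spec_op X Y Z Nx Ny Nz lap_sym"

definition curl_h :: "real \<Rightarrow> real \<Rightarrow> real \<Rightarrow> nat \<Rightarrow> nat \<Rightarrow> nat \<Rightarrow> gridfun \<Rightarrow> gridfun" where
  "curl_h X Y Z Nx Ny Nz = spec_op X Y Z Nx Ny Nz curl_sym"

definition C_h :: "real \<Rightarrow> real \<Rightarrow> real \<Rightarrow> nat \<Rightarrow> nat \<Rightarrow> nat \<Rightarrow> gridfun \<Rightarrow> gridfun" where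
  "C_h X Y Z Nx Ny Nz Q = (\<lambda>p. curl_h X Y Z Nx Ny Nz Q p + transpose (curl_h X Y Z Nx Ny Nz Q p))"

definition L_h :: "real \<Rightarrow> real \<Rightarrow> real \<Rightarrow> nat \<Rightarrow> nat \<Rightarrow> nat \<Rightarrow> real \<Rightarrow> real \<Rightarrow> real \<Rightarrow> gridfun \<Rightarrow> gridfun" where
  "L_h X Y Z Nx Ny Nz L1 L4 \<kappa>2 Q = (\<lambda>p. L1 *\<^sub>R lap_h X Y Z Nx Ny Nz Q p
      - (L4 / 2) *\<^sub>R C_h X Y Z Nx Ny Nz Q p - \<kappa>2 *\<^sub>R Q p)"

definition frob :: "real^3^3 \<Rightarrow> real^3^3 \<Rightarrow> real" where
  "frob A B = (\<Sum>r\<in>UNIV. \<Sum>c\<in>UNIV. A $ r $ c * B $ r $ c)"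

definition inner_h :: "real \<Rightarrow> real \<Rightarrow> real \<Rightarrow> nat \<Rightarrow> nat \<Rightarrow> nat \<Rightarrow> gridfun \<Rightarrow> gridfun \<Rightarrow> real" where
  "inner_h X Y Z Nx Ny Nz M N = (2 * X / real Nx) * (2 * Y / real Ny) * (2 * Z / real Nz)
      * (\<Sum>p\<in>grid_idx Nx Ny Nz. frob (M p) (N p))"

definition norm_h :: "real \<Rightarrow> real \<Rightarrow> real \<Rightarrow> nat \<Rightarrow> nat \<Rightarrow> nat \<Rightarrow> gridfun \<Rightarrow> real" where
  "norm_h X Y Z Nx Ny Nz M = sqrt (inner_h X Y Z Nx Ny Nz M M)"

text \<open>Operator exponential \<open>e^{tL}\<close> of a linear operator on the finite-dimensional space of grid
  functions, via its power series (convergence in finite dimensions is pointwise).\<close>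
definition op_exp :: "(gridfun \<Rightarrow> gridfun) \<Rightarrow> real \<Rightarrow> gridfun \<Rightarrow> gridfun" where
  "op_exp L t Q = (\<lambda>p. \<Sum>n. (t ^ n / fact n) *\<^sub>R ((L ^^ n) Q p))"

end

theory Submission
  imports Defs
begin

text \<open>Both claims reduce to a pointwise estimate on the Fourier symbol. For a wavevector \<open>k\<close> and a
  complex \<open>3\<times>3\<close> matrix \<open>A\<close>, the symbol of \<open>\<L>\<^sub>h\<close> satisfies
  \<open>Re\<langle>\<sigma>(k) A, A\<rangle> = -L\<^sub>1|k|\<^sup>2|A|\<^sup>2 - (L\<^sub>4/2) Re\<langle>C, A + A\<^sup>T\<rangle> - \<kappa>\<^sub>2|A|\<^sup>2\<close> with \<open>C = ik \<times>\<^sub>r A\<close>, and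
  \<open>|C| \<le> |k||A|\<close> by Lagrange's identity, so the form is at most
  \<open>-(L\<^sub>1|k|\<^sup>2 - |L\<^sub>4||k| + \<kappa>\<^sub>2)|A|\<^sup>2\<close>, which is nonpositive as soon as \<open>L\<^sub>4\<^sup>2 \<le> 4L\<^sub>1\<kappa>\<^sub>2\<close>.
  Orthogonality of the discrete exponentials (Parseval) turns this into \<open>\<langle>\<L>\<^sub>hQ, Q\<rangle>\<^sub>h \<le> 0\<close>.
  On the grid, \<open>\<L>\<^sub>h\<close> is a linear map of a finite-dimensional space, so the exponential series
  converges absolutely and may be differentiated termwise; hence
  \<open>d/dt \<parallel>e\<^bsup>t\<L>\<^esup>Q\<parallel>\<^sup>2 = 2\<langle>\<L>e\<^bsup>t\<L>\<^esup>Q, e\<^bsup>t\<L>\<^esup>Q\<rangle> \<le> 0\<close>.\<close>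

section \<open>The Fourier symbol\<close>

lemma frob_eq_inner: "frob A B = A \<bullet> B"
  by (simp add: frob_def inner_vec_def)

lemma inner_transpose_left:
  fixes A :: "'a::{semiring_1, real_inner}^'n^'m" and B :: "'a^'m^'n"
  shows "transpose A \<bullet> B = A \<bullet> transpose B"
  unfolding inner_vec_def transpose_def by simp (rule sum.swap)

lemma norm_transpose:
  fixes A :: "'a::{semiring_1, real_inner}^'n^'m"
  shows "norm (transpose A) = norm A"
  by (simp add: norm_eq_sqrt_inner inner_transpose_left)

lemma inner_complex_matrix:
  fixes A B :: "complex^'n^'m"
  shows "A \<bullet> B = Re (\<Sum>r\<in>UNIV. \<Sum>c\<in>UNIV. A $ r $ c * cnj (B $ r $ c))"
  by (simp add: inner_vec_def inner_complex_def)

lemma lap_sym_eq_scaleR: "lap_sym k A = (- (norm k)\<^sup>2) *\<^sub>R A"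
  by (simp add: lap_sym_def vec_eq_iff complex_eq_iff)

lemma norm_cross_c_le:
  "norm (cross_c (\<chi> l. complex_of_real (k $ l)) a) \<le> norm k * norm a"
proof -
  define u1 where "u1 = Re (a$1)" define u2 where "u2 = Re (a$2)" define u3 where "u3 = Re (a$3)"
  define w1 where "w1 = Im (a$1)" define w2 where "w2 = Im (a$2)" define w3 where "w3 = Im (a$3)"
  define k1 where "k1 = k$1" define k2 where "k2 = k$2" define k3 where "k3 = k$3"
  note defs = u1_def u2_def u3_def w1_def w2_def w3_def k1_def k2_def k3_def
  have lhs: "(norm (cross_c (\<chi> l. complex_of_real (k $ l)) a))\<^sup>2
     = (k2*u3 - k3*u2)\<^sup>2 + (k2*w3 - k3*w2)\<^sup>2 + (k3*u1 - k1*u3)\<^sup>2 + (k3*w1 - k1*w3)\<^sup>2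
       + (k1*u2 - k2*u1)\<^sup>2 + (k1*w2 - k2*w1)\<^sup>2"
    unfolding power2_norm_eq_inner
    by (simp add: inner_vec_def inner_complex_def sum_3 cross_c_def defs power2_eq_square)
  have rhs: "(norm k * norm a)\<^sup>2 = (k1\<^sup>2 + k2\<^sup>2 + k3\<^sup>2) * (u1\<^sup>2 + w1\<^sup>2 + u2\<^sup>2 + w2\<^sup>2 + u3\<^sup>2 + w3\<^sup>2)"
    unfolding power_mult_distrib power2_norm_eq_inner
    by (simp add: inner_vec_def inner_complex_def sum_3 defs power2_eq_square algebra_simps)
  \<comment> \<open>Lagrange's identity, applied to the real and imaginary parts of a separately\<close>
  have "(k1\<^sup>2 + k2\<^sup>2 + k3\<^sup>2) * (u1\<^sup>2 + w1\<^sup>2 + u2\<^sup>2 + w2\<^sup>2 + u3\<^sup>2 + w3\<^sup>2)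
      - ((k2*u3 - k3*u2)\<^sup>2 + (k2*w3 - k3*w2)\<^sup>2 + (k3*u1 - k1*u3)\<^sup>2 + (k3*w1 - k1*w3)\<^sup>2
         + (k1*u2 - k2*u1)\<^sup>2 + (k1*w2 - k2*w1)\<^sup>2)
      = (k1*u1 + k2*u2 + k3*u3)\<^sup>2 + (k1*w1 + k2*w2 + k3*w3)\<^sup>2"
    by (simp add: power2_eq_square algebra_simps)
  then have "(norm (cross_c (\<chi> l. complex_of_real (k $ l)) a))\<^sup>2 \<le> (norm k * norm a)\<^sup>2"
    unfolding lhs rhs by (metis diff_ge_0_iff_ge add_nonneg_nonneg zero_le_power2)
  then show ?thesis by (rule power2_le_imp_le) simp
qed

lemma norm_curl_sym_le: "norm (curl_sym k A) \<le> norm k * norm A"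
proof -
  have row: "norm (curl_sym k A $ r) = norm (cross_c (\<chi> l. complex_of_real (k $ l)) (A $ r))" for r
    by (simp add: curl_sym_def norm_vec_def norm_mult)
  have "norm (curl_sym k A) \<le> L2_set (\<lambda>r. norm k * norm (A $ r)) UNIV"
    unfolding norm_vec_def[of "curl_sym k A"]
    by (rule L2_set_mono) (simp_all add: row norm_cross_c_le)
  also have "\<dots> = norm k * norm A"
    by (simp add: L2_set_right_distrib norm_vec_def)
  finally show ?thesis .
qed

lemma linear_curl_sym: "linear (curl_sym k)"
proof (rule linearI)
  show "curl_sym k (A + B) = curl_sym k A + curl_sym k B" for A B
    by (simp add: curl_sym_def cross_c_def vec_eq_iff forall_3 vector_3 algebra_simps)
  show "curl_sym k (a *\<^sub>R A) = a *\<^sub>R curl_sym k A" for a A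
    by (simp add: curl_sym_def cross_c_def vec_eq_iff forall_3 vector_3)
      (simp add: scaleR_conv_of_real algebra_simps)
qed

definition L_sym :: "real \<Rightarrow> real \<Rightarrow> real \<Rightarrow> real^3 \<Rightarrow> complex^3^3 \<Rightarrow> complex^3^3" where
  "L_sym L1 L4 \<kappa>2 k A = L1 *\<^sub>R lap_sym k A
     - (L4 / 2) *\<^sub>R (curl_sym k A + transpose (curl_sym k A)) - \<kappa>2 *\<^sub>R A"

lemma linear_L_sym: "linear (L_sym L1 L4 \<kappa>2 k)"
  by (rule linearI)
    (simp_all add: L_sym_def lap_sym_eq_scaleR linear_add[OF linear_curl_sym] linear_scale[OF linear_curl_sym]
      transpose_def vec_eq_iff algebra_simps)

lemma L_sym_inner_nonpos:
  assumes "L1 > 0" "L4\<^sup>2 \<le> 4 * L1 * \<kappa>2"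
  shows "L_sym L1 L4 \<kappa>2 k A \<bullet> A \<le> 0"
proof -
  define C where "C = curl_sym k A"
  define n where "n = norm k * (norm A)\<^sup>2"
  have "\<bar>C \<bullet> A\<bar> \<le> n" "\<bar>C \<bullet> transpose A\<bar> \<le> n"
    using Cauchy_Schwarz_ineq2[of C A] Cauchy_Schwarz_ineq2[of C "transpose A"]
      norm_curl_sym_le[of k A] mult_right_mono[of "norm C" "norm k * norm A" "norm A"]
    by (auto simp: C_def n_def norm_transpose power2_eq_square mult.assoc)
  have curl_part: "- (L4 / 2) * (C \<bullet> A + C \<bullet> transpose A) \<le> \<bar>L4\<bar> * n"
  proof -
    have "- (L4 / 2) * (C \<bullet> A + C \<bullet> transpose A) \<le> \<bar>L4 / 2 * (C \<bullet> A + C \<bullet> transpose A)\<bar>"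
      using abs_ge_minus_self by simp
    also have "\<dots> = \<bar>L4\<bar> / 2 * \<bar>C \<bullet> A + C \<bullet> transpose A\<bar>"
      by (simp add: abs_mult)
    also have "\<dots> \<le> \<bar>L4\<bar> / 2 * (2 * n)"
      using \<open>\<bar>C \<bullet> A\<bar> \<le> n\<close> \<open>\<bar>C \<bullet> transpose A\<bar> \<le> n\<close>
      by (intro mult_left_mono) auto
    finally show ?thesis by simp
  qed
  have "L_sym L1 L4 \<kappa>2 k A \<bullet> A
      = - L1 * (norm k)\<^sup>2 * (norm A)\<^sup>2 - (L4 / 2) * (C \<bullet> A + C \<bullet> transpose A) - \<kappa>2 * (norm A)\<^sup>2"
    by (simp add: L_sym_def C_def lap_sym_eq_scaleR inner_diff_left inner_add_left
        inner_transpose_left power2_norm_eq_inner)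
  with curl_part have "L_sym L1 L4 \<kappa>2 k A \<bullet> A \<le> - ((L1 * (norm k)\<^sup>2 - \<bar>L4\<bar> * norm k + \<kappa>2) * (norm A)\<^sup>2)"
    by (simp add: n_def algebra_simps)
  moreover have quadratic: "L1 * (norm k)\<^sup>2 - \<bar>L4\<bar> * norm k + \<kappa>2 \<ge> 0"
  proof -
    have "4 * L1 * (L1 * (norm k)\<^sup>2 - \<bar>L4\<bar> * norm k + \<kappa>2) = (2 * L1 * norm k - \<bar>L4\<bar>)\<^sup>2 + (4 * L1 * \<kappa>2 - L4\<^sup>2)"
      by (simp add: power2_eq_square algebra_simps)
    then have "0 \<le> 4 * L1 * (L1 * (norm k)\<^sup>2 - \<bar>L4\<bar> * norm k + \<kappa>2)"
      using assms(2) by simp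
    then show ?thesis
      using assms(1) by (simp add: zero_le_mult_iff)
  qed
  ultimately show ?thesis
    using mult_nonneg_nonneg[OF quadratic zero_le_power2[of "norm A"]] by linarith
qed

section \<open>Discrete Fourier analysis on the grid\<close>

lemma cis_eq_1_imp_dvd:
  assumes "N > 0" "cis (2 * pi * of_int d / real N) = 1"
  shows "int N dvd d"
proof -
  obtain m :: int where "2 * pi * of_int d / real N = of_int (2 * m) * pi"
    using assms(2) by (auto simp: cis_conv_exp exp_eq_1)
  then have "real_of_int d = of_int m * real N"
    using assms(1) by (simp add: field_simps)
  then have "d = m * int N"
    by (metis of_int_eq_iff of_int_mult of_int_of_nat_eq)
  then show ?thesis by simp
qed

lemma sum_cis_int_window:
  fixes a d :: int
  assumes N: "N > 0"
  shows "(\<Sum>n\<in>{a..<a + int N}. cis (2 * pi * of_int n * of_int d / real N))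
       = (if int N dvd d then of_nat N else 0)"
proof (cases "int N dvd d")
  case True
  then obtain m where "d = int N * m" by blast
  then have "cis (2 * pi * of_int n * of_int d / real N) = 1" for n
    using N cis_multiple_2pi[of "of_int (n * m)"] by (simp add: mult.commute mult.left_commute)
  then show ?thesis using True by simp
next
  case False
  define \<theta> where "\<theta> = 2 * pi * of_int d / real N"
  have window: "{a..<a + int N} = (\<lambda>m. a + int m) ` {..<N}"
  proof (intro set_eqI iffI)
    fix x assume "x \<in> {a..<a + int N}"
    then have "x = a + int (nat (x - a))" "nat (x - a) < N" by auto
    then show "x \<in> (\<lambda>m. a + int m) ` {..<N}" by blast
  qed auto
  have cis_term: "cis (2 * pi * of_int (a + int m) * of_int d / real N) = cis (of_int a * \<theta>) * cis \<theta> ^ m" for m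
  proof -
    have "2 * pi * of_int (a + int m) * of_int d / real N = of_int a * \<theta> + real m * \<theta>"
      by (simp add: \<theta>_def add_divide_distrib algebra_simps)
    then show ?thesis by (simp only: Complex.DeMoivre cis_mult)
  qed
  have "cis \<theta> \<noteq> 1" using False cis_eq_1_imp_dvd[OF N] by (auto simp: \<theta>_def)
  moreover have "cis \<theta> ^ N = 1"
    using N cis_multiple_2pi[of "of_int d"] by (simp add: \<theta>_def Complex.DeMoivre)
  ultimately have geometric: "(\<Sum>m<N. cis \<theta> ^ m) = 0" by (simp add: sum_gp_strict)
  have "inj_on (\<lambda>m. a + int m) {..<N}" by (simp add: inj_on_def)
  then have "(\<Sum>n\<in>{a..<a + int N}. cis (2 * pi * of_int n * of_int d / real N))
      = (\<Sum>m<N. cis (2 * pi * of_int (a + int m) * of_int d / real N))"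
    unfolding window by (simp only: sum.reindex o_def)
  also have "\<dots> = cis (of_int a * \<theta>) * (\<Sum>m<N. cis \<theta> ^ m)"
    by (simp only: cis_term sum_distrib_left)
  finally show ?thesis using False geometric by simp
qed

text \<open>The window is \<open>{(- N) div 2 + 1 .. N div 2}\<close>, which has exactly \<open>N\<close> elements whether
  \<open>N\<close> is even or odd.\<close>

lemma sum_cis_centered_window:
  assumes N: "N > 0" and i: "i \<in> {1..N}" "i' \<in> {1..N}"
  shows "(\<Sum>n\<in>{- int N div 2 + 1 .. int N div 2}. cis (2 * pi * of_int n * of_int (int i - int i') / real N))
       = (if i = i' then of_nat N else 0)"
proof -
  have "- int N div 2 + 1 + int N = int N div 2 + 1" by presburger
  then have window: "{- int N div 2 + 1 .. int N div 2} = {- int N div 2 + 1 ..< - int N div 2 + 1 + int N}"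
    by (simp only: atLeastLessThanPlusOne_atLeastAtMost_int)
  have "int N dvd (int i - int i') \<longleftrightarrow> i = i'"
  proof
    assume "int N dvd (int i - int i')"
    moreover have "\<bar>int i - int i'\<bar> < int N" using i by auto
    ultimately show "i = i'" using dvd_imp_le_int[of "int i - int i'" "int N"] by fastforce
  qed simp
  then show ?thesis unfolding window sum_cis_int_window[OF N] by simp
qed

lemma wave_vec_inner_grid_pt_diff:
  assumes "X > 0" "Y > 0" "Z > 0" "Nx > 0" "Ny > 0" "Nz > 0"
  shows "wave_vec X Y Z (n1, n2, n3) \<bullet> grid_pt X Y Z Nx Ny Nz (i, j, k)
       - wave_vec X Y Z (n1, n2, n3) \<bullet> grid_pt X Y Z Nx Ny Nz (i', j', k')
     = 2 * pi * of_int n1 * of_int (int i - int i') / real Nx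
     + 2 * pi * of_int n2 * of_int (int j - int j') / real Ny
     + 2 * pi * of_int n3 * of_int (int k - int k') / real Nz"
  using assms by (simp add: wave_vec_def grid_pt_def inner_vec_def sum_3 field_simps)

lemma sum_wave_cis_grid_diff:
  assumes pos: "X > 0" "Y > 0" "Z > 0" "Nx > 0" "Ny > 0" "Nz > 0"
    and p: "p \<in> grid_idx Nx Ny Nz" and q: "q \<in> grid_idx Nx Ny Nz"
  shows "(\<Sum>n\<in>wave_idx Nx Ny Nz. cis (wave_vec X Y Z n \<bullet> grid_pt X Y Z Nx Ny Nz p
                                   - wave_vec X Y Z n \<bullet> grid_pt X Y Z Nx Ny Nz q))
       = (if p = q then of_nat (Nx * Ny * Nz) else 0)"
proof -
  obtain i j k i' j' k' where pq: "p = (i, j, k)" "q = (i', j', k')" by (cases p, cases q) auto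
  define axis where "axis N a b n = cis (2 * pi * of_int n * of_int (int a - int b) / real N)"
    for N a b :: nat and n :: int
  define window where "window N = {- int N div 2 + 1 .. int N div 2}" for N :: nat
  have "(\<Sum>n\<in>wave_idx Nx Ny Nz. cis (wave_vec X Y Z n \<bullet> grid_pt X Y Z Nx Ny Nz p
                                   - wave_vec X Y Z n \<bullet> grid_pt X Y Z Nx Ny Nz q))
      = (\<Sum>n1\<in>window Nx. \<Sum>n2\<in>window Ny. \<Sum>n3\<in>window Nz. axis Nx i i' n1 * axis Ny j j' n2 * axis Nz k k' n3)"
    unfolding wave_idx_def window_def pq sum.cartesian_product' axis_def
    by (simp add: wave_vec_inner_grid_pt_diff[OF pos] flip: cis_mult)
  also have "\<dots> = (\<Sum>n1\<in>window Nx. \<Sum>n2\<in>window Ny. axis Nx i i' n1 * axis Ny j j' n2 * sum (axis Nz k k') (window Nz))"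
    by (simp only: sum_distrib_left)
  also have "\<dots> = (\<Sum>n1\<in>window Nx. \<Sum>n2\<in>window Ny. axis Nx i i' n1 * axis Ny j j' n2) * sum (axis Nz k k') (window Nz)"
    by (simp only: sum_distrib_right)
  also have "\<dots> = sum (axis Nx i i') (window Nx) * sum (axis Ny j j') (window Ny) * sum (axis Nz k k') (window Nz)"
    by (simp only: sum_product)
  also have "\<dots> = (if p = q then of_nat (Nx * Ny * Nz) else 0)"
  proof -
    have "sum (axis N a b) (window N) = (if a = b then of_nat N else 0)"
      if "N > 0" "a \<in> {1..N}" "b \<in> {1..N}" for N a b
      unfolding axis_def window_def using that by (rule sum_cis_centered_window)
    then show ?thesis using p q pos by (simp add: pq grid_idx_def)
  qed
  finally show ?thesis .
qed

lemma finite_grid_idx [simp]: "finite (grid_idx Nx Ny Nz)"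
  by (simp add: grid_idx_def)

lemma spec_op_component:
  assumes "p \<in> grid_idx Nx Ny Nz"
  shows "spec_op X Y Z Nx Ny Nz \<sigma> v p $ r $ c
       = Re (\<Sum>n\<in>wave_idx Nx Ny Nz. \<sigma> (wave_vec X Y Z n) (dft X Y Z Nx Ny Nz v n) $ r $ c
               * cis (wave_vec X Y Z n \<bullet> grid_pt X Y Z Nx Ny Nz p)) / real (Nx * Ny * Nz)"
  using assms by (simp add: spec_op_def Re_divide_of_nat del: of_nat_mult)

lemma spec_op_id:
  assumes pos: "X > 0" "Y > 0" "Z > 0" "Nx > 0" "Ny > 0" "Nz > 0"
    and p: "p \<in> grid_idx Nx Ny Nz"
  shows "spec_op X Y Z Nx Ny Nz (\<lambda>k A. A) v p = v p"
proof -
  define G W where "G = grid_idx Nx Ny Nz" and "W = wave_idx Nx Ny Nz"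
  define phase where "phase n q = wave_vec X Y Z n \<bullet> grid_pt X Y Z Nx Ny Nz q" for n q
  have "(\<Sum>n\<in>W. dft X Y Z Nx Ny Nz v n $ r $ c * cis (phase n p))
      = (\<Sum>q\<in>G. of_real (v q $ r $ c) * (\<Sum>n\<in>W. cis (phase n p - phase n q)))" for r c
    unfolding dft_def G_def phase_def
    by (simp add: sum_distrib_left sum_distrib_right mult.assoc sum.swap[of _ W "grid_idx Nx Ny Nz"]
        cis_mult)
  also have "\<dots> r c = of_real (v p $ r $ c) * of_nat (Nx * Ny * Nz)" for r c
    using p unfolding G_def W_def phase_def
    by (simp add: sum_wave_cis_grid_diff[OF pos p] if_distrib sum.delta cong: if_cong)
  finally show ?thesis
    using p pos by (simp add: vec_eq_iff spec_op_component W_def phase_def del: of_nat_mult)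
qed

lemma sum_inner_spec_op:
  "(\<Sum>p\<in>grid_idx Nx Ny Nz. spec_op X Y Z Nx Ny Nz \<sigma> v p \<bullet> w p)
   = (\<Sum>n\<in>wave_idx Nx Ny Nz. \<sigma> (wave_vec X Y Z n) (dft X Y Z Nx Ny Nz v n) \<bullet> dft X Y Z Nx Ny Nz w n)
     / real (Nx * Ny * Nz)"
proof -
  define G W M where "G = grid_idx Nx Ny Nz" and "W = wave_idx Nx Ny Nz" and "M = real (Nx * Ny * Nz)"
  define S where "S n = \<sigma> (wave_vec X Y Z n) (dft X Y Z Nx Ny Nz v n)" for n
  define e where "e n q = cis (wave_vec X Y Z n \<bullet> grid_pt X Y Z Nx Ny Nz q)" for n q
  define f where "f p r c n = Re (of_real (w p $ r $ c) * (S n $ r $ c * e n p))" for p r c n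
  have Re_scale: "Re (of_real x * z) = x * Re z" for x z by simp
  have pointwise: "spec_op X Y Z Nx Ny Nz \<sigma> v p \<bullet> w p = (\<Sum>r\<in>UNIV. \<Sum>c\<in>UNIV. \<Sum>n\<in>W. f p r c n) / M"
    if "p \<in> G" for p
  proof -
    have "spec_op X Y Z Nx Ny Nz \<sigma> v p $ r $ c = Re (\<Sum>n\<in>W. S n $ r $ c * e n p) / M" for r c
      using spec_op_component that unfolding G_def W_def M_def S_def e_def .
    then show ?thesis
      by (simp add: inner_vec_def f_def Re_scale Re_sum sum_divide_distrib sum_distrib_left mult.commute)
  qed
  have cnj_dft: "cnj (dft X Y Z Nx Ny Nz w n $ r $ c) = (\<Sum>p\<in>G. of_real (w p $ r $ c) * e n p)" for n r c
    by (simp add: dft_def e_def G_def cis_cnj)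
  have "(\<Sum>p\<in>G. \<Sum>r\<in>UNIV. \<Sum>c\<in>UNIV. \<Sum>n\<in>W. f p r c n)
      = (\<Sum>n\<in>W. \<Sum>r\<in>UNIV. \<Sum>c\<in>UNIV. \<Sum>p\<in>G. f p r c n)"
    by (simp only: sum.swap[where A = W]) (simp only: sum.swap[where A = G])
  also have "\<dots> = (\<Sum>n\<in>W. S n \<bullet> dft X Y Z Nx Ny Nz w n)"
    by (simp add: inner_complex_matrix cnj_dft f_def Re_sum sum_distrib_left mult.left_commute)
  finally have "(\<Sum>p\<in>G. spec_op X Y Z Nx Ny Nz \<sigma> v p \<bullet> w p) = (\<Sum>n\<in>W. S n \<bullet> dft X Y Z Nx Ny Nz w n) / M"
    by (simp add: pointwise flip: sum_divide_distrib)
  then show ?thesis unfolding G_def W_def M_def S_def .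
qed

lemma L_h_eq_spec_op_L_sym:
  assumes pos: "X > 0" "Y > 0" "Z > 0" "Nx > 0" "Ny > 0" "Nz > 0"
    and p: "p \<in> grid_idx Nx Ny Nz"
  shows "L_h X Y Z Nx Ny Nz L1 L4 \<kappa>2 v p = spec_op X Y Z Nx Ny Nz (L_sym L1 L4 \<kappa>2) v p"
proof -
  define W M where "W = wave_idx Nx Ny Nz" and "M = real (Nx * Ny * Nz)"
  define k where "k n = wave_vec X Y Z n" for n
  define D where "D n = dft X Y Z Nx Ny Nz v n" for n
  define e where "e n = cis (wave_vec X Y Z n \<bullet> grid_pt X Y Z Nx Ny Nz p)" for n
  have component: "spec_op X Y Z Nx Ny Nz \<sigma> v p $ r $ c = Re (\<Sum>n\<in>W. \<sigma> (k n) (D n) $ r $ c * e n) / M"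
    for \<sigma> r c
    using spec_op_component[OF p] unfolding W_def M_def k_def D_def e_def .
  have "(\<Sum>n\<in>W. L_sym L1 L4 \<kappa>2 (k n) (D n) $ r $ c * e n)
      = of_real L1 * (\<Sum>n\<in>W. lap_sym (k n) (D n) $ r $ c * e n)
        - of_real (L4 / 2) * ((\<Sum>n\<in>W. curl_sym (k n) (D n) $ r $ c * e n)
                              + (\<Sum>n\<in>W. curl_sym (k n) (D n) $ c $ r * e n))
        - of_real \<kappa>2 * (\<Sum>n\<in>W. D n $ r $ c * e n)" for r c
    by (simp only: L_sym_def vector_minus_component vector_add_component vector_scaleR_component
        transpose_def vec_lambda_beta)
      (simp add: scaleR_conv_of_real algebra_simps sum.distrib sum_subtractf sum_distrib_left)
  moreover have "Re (of_real a * x - of_real b * (y + z) - of_real d * w) / M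
      = a * (Re x / M) - b * (Re y / M + Re z / M) - d * (Re w / M)" for a b d x y z w
    by (simp add: diff_divide_distrib add_divide_distrib distrib_left)
  ultimately have "spec_op X Y Z Nx Ny Nz (L_sym L1 L4 \<kappa>2) v p $ r $ c
      = L1 * spec_op X Y Z Nx Ny Nz lap_sym v p $ r $ c
        - L4 / 2 * (spec_op X Y Z Nx Ny Nz curl_sym v p $ r $ c + spec_op X Y Z Nx Ny Nz curl_sym v p $ c $ r)
        - \<kappa>2 * spec_op X Y Z Nx Ny Nz (\<lambda>k A. A) v p $ r $ c" for r c
    by (simp only: component)
  then show ?thesis
    by (simp add: vec_eq_iff L_h_def C_h_def lap_h_def curl_h_def transpose_def spec_op_id[OF pos p])
qed

lemma sum_inner_L_h_nonpos:
  assumes pos: "X > 0" "Y > 0" "Z > 0" "Nx > 0" "Ny > 0" "Nz > 0"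
    and L: "L1 > 0" "L4\<^sup>2 \<le> 4 * L1 * \<kappa>2"
  shows "(\<Sum>p\<in>grid_idx Nx Ny Nz. L_h X Y Z Nx Ny Nz L1 L4 \<kappa>2 v p \<bullet> v p) \<le> 0"
proof -
  have "(\<Sum>p\<in>grid_idx Nx Ny Nz. L_h X Y Z Nx Ny Nz L1 L4 \<kappa>2 v p \<bullet> v p)
      = (\<Sum>p\<in>grid_idx Nx Ny Nz. spec_op X Y Z Nx Ny Nz (L_sym L1 L4 \<kappa>2) v p \<bullet> v p)"
    by (simp add: L_h_eq_spec_op_L_sym[OF pos])
  also have "\<dots> = (\<Sum>n\<in>wave_idx Nx Ny Nz.
      L_sym L1 L4 \<kappa>2 (wave_vec X Y Z n) (dft X Y Z Nx Ny Nz v n) \<bullet> dft X Y Z Nx Ny Nz v n) / real (Nx * Ny * Nz)"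
    by (rule sum_inner_spec_op)
  also have "\<dots> \<le> 0"
    by (intro divide_nonpos_nonneg sum_nonpos L_sym_inner_nonpos L) simp
  finally show ?thesis .
qed

section \<open>Operators acting linearly on the grid values\<close>

definition grid_local_linear :: "(nat \<times> nat \<times> nat) set \<Rightarrow> (gridfun \<Rightarrow> gridfun) \<Rightarrow> bool" where
  "grid_local_linear G L \<longleftrightarrow>
     (\<forall>v w a b. \<forall>p\<in>G. L (\<lambda>q. a *\<^sub>R v q + b *\<^sub>R w q) p = a *\<^sub>R L v p + b *\<^sub>R L w p) \<and>
     (\<forall>v w. (\<forall>q\<in>G. v q = w q) \<longrightarrow> (\<forall>p\<in>G. L v p = L w p))"

lemma grid_local_linearD:
  assumes "grid_local_linear G L" "p \<in> G"
  shows grid_local_linear_lincomb: "L (\<lambda>q. a *\<^sub>R v q + b *\<^sub>R w q) p = a *\<^sub>R L v p + b *\<^sub>R L w p"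
    and grid_local_linear_cong: "(\<And>q. q \<in> G \<Longrightarrow> v q = w q) \<Longrightarrow> L v p = L w p"
  using assms unfolding grid_local_linear_def by blast+

lemma dft_linear:
  "dft X Y Z Nx Ny Nz (\<lambda>q. a *\<^sub>R v q + b *\<^sub>R w q) n
   = a *\<^sub>R dft X Y Z Nx Ny Nz v n + b *\<^sub>R dft X Y Z Nx Ny Nz w n"
  by (simp add: dft_def vec_eq_iff) (simp add: scaleR_conv_of_real sum.distrib sum_distrib_left algebra_simps)

lemma dft_cong: "\<forall>q\<in>grid_idx Nx Ny Nz. v q = w q \<Longrightarrow> dft X Y Z Nx Ny Nz v = dft X Y Z Nx Ny Nz w"
  by (simp add: dft_def fun_eq_iff)

lemma spec_op_grid_local_linear:
  assumes "\<And>k. linear (\<sigma> k)"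
  shows "grid_local_linear (grid_idx Nx Ny Nz) (spec_op X Y Z Nx Ny Nz \<sigma>)"
proof -
  have "spec_op X Y Z Nx Ny Nz \<sigma> (\<lambda>q. a *\<^sub>R v q + b *\<^sub>R w q) p
      = a *\<^sub>R spec_op X Y Z Nx Ny Nz \<sigma> v p + b *\<^sub>R spec_op X Y Z Nx Ny Nz \<sigma> w p"
    if "p \<in> grid_idx Nx Ny Nz" for v w a b p
    unfolding vec_eq_iff using that assms
    by (simp add: spec_op_component dft_linear linear_add linear_scale)
      (simp add: scaleR_conv_of_real sum.distrib sum_subtractf sum_distrib_left algebra_simps
        add_divide_distrib diff_divide_distrib)
  moreover have "spec_op X Y Z Nx Ny Nz \<sigma> v p = spec_op X Y Z Nx Ny Nz \<sigma> w p"
    if "\<forall>q\<in>grid_idx Nx Ny Nz. v q = w q" for v w p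
    unfolding spec_op_def dft_cong[OF that] ..
  ultimately show ?thesis
    unfolding grid_local_linear_def by blast
qed

lemma L_h_grid_local_linear:
  assumes pos: "X > 0" "Y > 0" "Z > 0" "Nx > 0" "Ny > 0" "Nz > 0"
  shows "grid_local_linear (grid_idx Nx Ny Nz) (L_h X Y Z Nx Ny Nz L1 L4 \<kappa>2)"
  using spec_op_grid_local_linear[OF linear_L_sym]
  by (simp add: grid_local_linear_def L_h_eq_spec_op_L_sym[OF pos])

lemma grid_local_linear_sum:
  assumes "grid_local_linear G L" "p \<in> G" "finite I"
  shows "L (\<lambda>x. \<Sum>i\<in>I. c i *\<^sub>R f i x) p = (\<Sum>i\<in>I. c i *\<^sub>R L (f i) p)"
  using assms(3)
proof (induction I rule: finite_induct)
  case empty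
  show ?case
    using grid_local_linear_lincomb[OF assms(1,2), of 0 "\<lambda>_. 0" 0 "\<lambda>_. 0"] by simp
next
  case (insert i I)
  with grid_local_linear_lincomb[OF assms(1,2), of "c i" "f i" 1 "\<lambda>x. \<Sum>i\<in>I. c i *\<^sub>R f i x"]
  show ?case by simp
qed

lemma grid_local_linear_expansion:
  assumes "finite G" "grid_local_linear G L" "p \<in> G"
  shows "L v p = (\<Sum>q\<in>G. \<Sum>j\<in>Basis. (v q \<bullet> j) *\<^sub>R L (\<lambda>x. if x = q then j else 0) p)"
proof -
  define w where "w x = (\<Sum>(q, j)\<in>G \<times> Basis. (v q \<bullet> j) *\<^sub>R (if x = q then j else 0))" for x
  have "(\<Sum>j\<in>Basis. (v q \<bullet> j) *\<^sub>R (if x = q then j else 0)) = (if x = q then v q else 0)" for x q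
    by (cases "x = q") (simp_all add: euclidean_representation)
  then have "w x = v x" if "x \<in> G" for x
    using that assms(1) by (simp add: w_def sum.cartesian_product')
  then have "L v p = L w p"
    by (intro grid_local_linear_cong[OF assms(2,3)]) simp
  also have "\<dots> = (\<Sum>(q, j)\<in>G \<times> Basis. (v q \<bullet> j) *\<^sub>R L (\<lambda>x. if x = q then j else 0) p)"
    unfolding w_def case_prod_beta
    by (rule grid_local_linear_sum[OF assms(2,3)]) (simp add: assms(1))
  finally show ?thesis by (simp add: sum.cartesian_product')
qed

section \<open>The exponential series\<close>

definition grid_norm1 :: "(nat \<times> nat \<times> nat) set \<Rightarrow> gridfun \<Rightarrow> real" where
  "grid_norm1 G v = (\<Sum>q\<in>G. norm (v q))"

lemma norm_le_grid_norm1: "finite G \<Longrightarrow> q \<in> G \<Longrightarrow> norm (v q) \<le> grid_norm1 G v"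
  unfolding grid_norm1_def by (rule member_le_sum) auto

lemma grid_local_linear_bounded:
  assumes fin: "finite G" and L: "grid_local_linear G L"
  obtains K where "K \<ge> 0" "\<And>v. grid_norm1 G (L v) \<le> K * grid_norm1 G v"
proof
  define \<delta> :: "nat \<times> nat \<times> nat \<Rightarrow> real^3^3 \<Rightarrow> gridfun"
    where "\<delta> q j = (\<lambda>x. if x = q then j else 0)" for q j
  define K where "K = (\<Sum>p\<in>G. \<Sum>q\<in>G. \<Sum>j\<in>Basis. norm (L (\<delta> q j) p))"
  show "K \<ge> 0" by (simp add: K_def sum_nonneg)
  fix v
  have "norm (L v p) \<le> (\<Sum>q\<in>G. \<Sum>j\<in>Basis. grid_norm1 G v * norm (L (\<delta> q j) p))" if p: "p \<in> G" for p
  proof -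
    have "norm (L v p) \<le> (\<Sum>q\<in>G. \<Sum>j\<in>Basis. norm ((v q \<bullet> j) *\<^sub>R L (\<delta> q j) p))"
      unfolding grid_local_linear_expansion[OF fin L p, of v] \<delta>_def
      by (intro order_trans[OF norm_sum] sum_mono norm_sum)
    also have "\<dots> \<le> (\<Sum>q\<in>G. \<Sum>j\<in>Basis. grid_norm1 G v * norm (L (\<delta> q j) p))"
    proof (intro sum_mono)
      fix q and j :: "real^3^3" assume "q \<in> G" "j \<in> Basis"
      then have "\<bar>v q \<bullet> j\<bar> \<le> grid_norm1 G v"
        using Basis_le_norm[of j "v q"] norm_le_grid_norm1[OF fin, of q v] by linarith
      then show "norm ((v q \<bullet> j) *\<^sub>R L (\<delta> q j) p) \<le> grid_norm1 G v * norm (L (\<delta> q j) p)"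
        by (simp add: mult_right_mono)
    qed
    finally show ?thesis .
  qed
  then have "grid_norm1 G (L v) \<le> (\<Sum>p\<in>G. \<Sum>q\<in>G. \<Sum>j\<in>Basis. grid_norm1 G v * norm (L (\<delta> q j) p))"
    unfolding grid_norm1_def[of G "L v"] by (rule sum_mono)
  also have "\<dots> = grid_norm1 G v * K"
    by (simp add: K_def sum_distrib_left)
  finally show "grid_norm1 G (L v) \<le> K * grid_norm1 G v"
    by (simp add: mult.commute)
qed

lemma summable_op_exp_series:
  assumes fin: "finite G" and L: "grid_local_linear G L" and q: "q \<in> G"
  shows "summable (\<lambda>n. (t ^ n / fact n) *\<^sub>R (L ^^ n) Q q)"
proof -
  obtain K where K: "K \<ge> 0" "\<And>v. grid_norm1 G (L v) \<le> K * grid_norm1 G v"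
    using grid_local_linear_bounded[OF fin L] by blast
  have iterate: "grid_norm1 G ((L ^^ n) Q) \<le> K ^ n * grid_norm1 G Q" for n
  proof (induction n)
    case (Suc n)
    have "grid_norm1 G ((L ^^ Suc n) Q) \<le> K * grid_norm1 G ((L ^^ n) Q)" using K(2) by simp
    also have "\<dots> \<le> K * (K ^ n * grid_norm1 G Q)" using Suc K(1) by (rule mult_left_mono)
    finally show ?case by (simp add: mult.assoc)
  qed simp
  have "norm ((t ^ n / fact n) *\<^sub>R (L ^^ n) Q q) \<le> grid_norm1 G Q * (inverse (fact n) * (K * \<bar>t\<bar>) ^ n)" for n
  proof -
    have "norm ((t ^ n / fact n) *\<^sub>R (L ^^ n) Q q) = \<bar>t\<bar> ^ n / fact n * norm ((L ^^ n) Q q)"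
      by (simp add: power_abs)
    also have "\<dots> \<le> \<bar>t\<bar> ^ n / fact n * (K ^ n * grid_norm1 G Q)"
      using norm_le_grid_norm1[OF fin q] iterate by (intro mult_left_mono) (auto intro: order_trans)
    also have "\<dots> = grid_norm1 G Q * (inverse (fact n) * (K * \<bar>t\<bar>) ^ n)"
      by (simp add: power_mult_distrib field_simps)
    finally show ?thesis .
  qed
  then show ?thesis
    by (intro summable_comparison_test[OF _ summable_mult[OF summable_exp]]) auto
qed

lemma op_exp_0: "op_exp L 0 Q = Q"
proof
  fix p
  have "(\<lambda>n. (0 ^ n / fact n) *\<^sub>R (L ^^ n) Q p) = (\<lambda>n. if n = 0 then Q p else 0)"
    by (auto simp: fun_eq_iff)
  then show "op_exp L 0 Q p = Q p"
    unfolding op_exp_def using sums_single[of 0 "\<lambda>_. Q p"] by (simp add: sums_iff)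
qed

lemma op_exp_inner_eq_suminf:
  assumes "finite G" "grid_local_linear G L" "q \<in> G"
  shows "op_exp L t Q q \<bullet> j = (\<Sum>n. (t ^ n / fact n) * ((L ^^ n) Q q \<bullet> j))"
  unfolding op_exp_def
  by (simp add: bounded_linear.suminf[OF bounded_linear_inner_left summable_op_exp_series[OF assms]])

lemma summable_op_exp_inner:
  assumes "finite G" "grid_local_linear G L" "q \<in> G"
  shows "summable (\<lambda>n. (t ^ n / fact n) * ((L ^^ n) Q q \<bullet> j))"
  using bounded_linear.summable[OF bounded_linear_inner_left summable_op_exp_series[OF assms]] by simp

lemma apply_op_exp_eq_suminf:
  assumes fin: "finite G" and L: "grid_local_linear G L" and q: "q \<in> G"
  shows "L (op_exp L t Q) q = (\<Sum>n. (t ^ n / fact n) *\<^sub>R (L ^^ Suc n) Q q)"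
proof -
  define M where "M q' j = L (\<lambda>x. if x = q' then j else 0) q" for q' j
  define c where "c n q' j = (t ^ n / fact n) * ((L ^^ n) Q q' \<bullet> j)" for n q' j
  have "(t ^ n / fact n) *\<^sub>R (L ^^ Suc n) Q q = (\<Sum>q'\<in>G. \<Sum>j\<in>Basis. c n q' j *\<^sub>R M q' j)" for n
    using grid_local_linear_expansion[OF fin L q, of "(L ^^ n) Q"]
    by (simp add: c_def M_def scaleR_sum_right)
  then have "(\<Sum>n. (t ^ n / fact n) *\<^sub>R (L ^^ Suc n) Q q) = (\<Sum>q'\<in>G. \<Sum>j\<in>Basis. \<Sum>n. c n q' j *\<^sub>R M q' j)"
    using summable_op_exp_inner[OF fin L]
    by (simp add: c_def suminf_sum summable_sum summable_scaleR_left)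
  also have "\<dots> = (\<Sum>q'\<in>G. \<Sum>j\<in>Basis. (op_exp L t Q q' \<bullet> j) *\<^sub>R M q' j)"
    using summable_op_exp_inner[OF fin L] op_exp_inner_eq_suminf[OF fin L]
    by (simp add: c_def suminf_scaleR_left)
  also have "\<dots> = L (op_exp L t Q) q"
    by (simp add: M_def grid_local_linear_expansion[OF fin L q, of "op_exp L t Q"])
  finally show ?thesis ..
qed

lemma has_real_derivative_op_exp_inner:
  assumes fin: "finite G" and L: "grid_local_linear G L" and q: "q \<in> G"
  shows "((\<lambda>s. op_exp L s Q q \<bullet> j) has_real_derivative L (op_exp L t Q) q \<bullet> j) (at t)"
proof -
  define c where "c n = (L ^^ n) Q q \<bullet> j / fact n" for n
  have series: "op_exp L s Q q \<bullet> j = (\<Sum>n. c n * s ^ n)" for s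
    by (simp add: op_exp_inner_eq_suminf[OF fin L q] c_def mult.commute)
  have "summable (\<lambda>n. c n * y ^ n)" for y
    using summable_op_exp_inner[OF fin L q, of y Q j] by (simp add: c_def mult.commute)
  then have "((\<lambda>s. \<Sum>n. c n * s ^ n) has_real_derivative (\<Sum>n. diffs c n * t ^ n)) (at t)"
    by (rule termdiffs_strong_converges_everywhere)
  moreover have "(\<Sum>n. diffs c n * t ^ n) = L (op_exp L t Q) q \<bullet> j"
  proof -
    have "diffs c n * t ^ n = (t ^ n / fact n) * ((L ^^ n) (L Q) q \<bullet> j)" for n
      by (simp add: diffs_def c_def funpow_Suc_right del: funpow.simps)
    then show ?thesis
      using bounded_linear.suminf[OF bounded_linear_inner_left[of j] summable_op_exp_series[OF fin L q, of t "L Q"]]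
      by (simp add: apply_op_exp_eq_suminf[OF fin L q] funpow_Suc_right del: funpow.simps)
  qed
  ultimately show ?thesis
    unfolding series by simp
qed

lemma op_exp_contraction:
  assumes fin: "finite G" and L: "grid_local_linear G L"
    and dissipative: "\<And>v. (\<Sum>p\<in>G. L v p \<bullet> v p) \<le> 0"
    and "t \<ge> 0"
  shows "(\<Sum>p\<in>G. op_exp L t Q p \<bullet> op_exp L t Q p) \<le> (\<Sum>p\<in>G. Q p \<bullet> Q p)"
proof -
  define F where "F s = (\<Sum>p\<in>G. \<Sum>j\<in>Basis. (op_exp L s Q p \<bullet> j) * (op_exp L s Q p \<bullet> j))" for s
  have F_eq: "F s = (\<Sum>p\<in>G. op_exp L s Q p \<bullet> op_exp L s Q p)" for s
    by (simp add: F_def flip: euclidean_inner)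
  have "F t \<le> F 0"
  proof (rule DERIV_nonpos_imp_nonincreasing[OF \<open>t \<ge> 0\<close>])
    fix s
    define e where "e = op_exp L s Q"
    have "(F has_real_derivative (\<Sum>p\<in>G. \<Sum>j\<in>Basis. (L e p \<bullet> j) * (e p \<bullet> j) + (L e p \<bullet> j) * (e p \<bullet> j))) (at s)"
      unfolding F_def e_def
      by (intro DERIV_sum DERIV_mult has_real_derivative_op_exp_inner[OF fin L])
    moreover have "(\<Sum>p\<in>G. \<Sum>j\<in>Basis. (L e p \<bullet> j) * (e p \<bullet> j) + (L e p \<bullet> j) * (e p \<bullet> j))
        = 2 * (\<Sum>p\<in>G. L e p \<bullet> e p)"
      by (simp only: sum.distrib euclidean_inner[symmetric] mult_2)
    ultimately show "\<exists>y. (F has_real_derivative y) (at s) \<and> y \<le> 0"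
      using dissipative[of e] by auto
  qed
  then show ?thesis
    by (simp add: F_eq op_exp_0)
qed

theorem lemma4p1:
  fixes X Y Z L1 L4 \<kappa>2 :: real and Nx Ny Nz :: nat
  assumes "X > 0" "Y > 0" "Z > 0"
    and "Nx > 0" "Ny > 0" "Nz > 0" "even Nx" "even Ny" "even Nz"
    and "L1 > 0" "\<kappa>2 \<ge> L4\<^sup>2 / (2 * L1)"
  shows "(\<forall>Q\<in>Mh Nx Ny Nz. inner_h X Y Z Nx Ny Nz (L_h X Y Z Nx Ny Nz L1 L4 \<kappa>2 Q) Q \<le> 0)
       \<and> (\<forall>t\<ge>0. \<forall>Q\<in>Mh Nx Ny Nz.
            norm_h X Y Z Nx Ny Nz (op_exp (L_h X Y Z Nx Ny Nz L1 L4 \<kappa>2) t Q) \<le> norm_h X Y Z Nx Ny Nz Q)"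
proof -
  note pos = assms(1-6)
  define h where "h = (2 * X / real Nx) * (2 * Y / real Ny) * (2 * Z / real Nz)"
  have "h \<ge> 0" using pos by (simp add: h_def)
  have inner_h_eq: "inner_h X Y Z Nx Ny Nz M N = h * (\<Sum>p\<in>grid_idx Nx Ny Nz. M p \<bullet> N p)" for M N
    by (simp add: inner_h_def h_def frob_eq_inner)
  have "L4\<^sup>2 \<le> 2 * L1 * \<kappa>2"
    using assms(10,11) by (simp add: field_simps)
  then have "L4\<^sup>2 \<le> 4 * L1 * \<kappa>2"
    using zero_le_power2[of L4] by linarith
  then have dissipative: "(\<Sum>p\<in>grid_idx Nx Ny Nz. L_h X Y Z Nx Ny Nz L1 L4 \<kappa>2 v p \<bullet> v p) \<le> 0" for v
    using sum_inner_L_h_nonpos[OF pos \<open>L1 > 0\<close>] by blast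
  have "(\<Sum>p\<in>grid_idx Nx Ny Nz. op_exp (L_h X Y Z Nx Ny Nz L1 L4 \<kappa>2) t Q p \<bullet> op_exp (L_h X Y Z Nx Ny Nz L1 L4 \<kappa>2) t Q p)
      \<le> (\<Sum>p\<in>grid_idx Nx Ny Nz. Q p \<bullet> Q p)" if "t \<ge> 0" for t Q
    using op_exp_contraction[OF finite_grid_idx L_h_grid_local_linear[OF pos] dissipative that] .
  then show ?thesis
    using \<open>h \<ge> 0\<close> dissipative
    by (auto simp: norm_h_def inner_h_eq intro: mult_nonneg_nonpos mult_left_mono)
qed

end
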